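(* Let $\mathcal{V}$ be a finite veering triangulation with face set $F$, let $w$ be a weight system on $\mathcal{V}$, $F_w=\{f\in F: w_f>0\}$, and $\varphi\in\mathrm{Aut}^+(\mathcal{Q}_{\mathcal{V},w})$. For $f\in F_w$ define the sequence $g^\varphi(f)=(g_i)_{i\ge1}$ of triangles of $\mathcal{Q}_{\mathcal{V},w}$ by $g_1=\varphi(L(f))$ and, for $i\ge1$, stop if $g_i\in U(F_w)$, and otherwise set $g_{i+1}=\varphi(\mathfrak{a}(g_i))$. Then for every $f\in F_w$ the sequence $g^\varphi(f)$ is finite, and if $f,f'\in F_w$ are distinct, then the last elements of $g^\varphi(f)$ and $g^\varphi(f')$ are distinct.
   Context: A veering triangulation is in particular an ideal triangulation of a 3-manifold with a taut structure: a coorientation of faces such that each tetrahedron has two faces cooriented out and two cooriented in, and each edge is the top diagonal (common edge of the two outward-cooriented faces) of exactly one tetrahedron and the bottom diagonal of exactly one. For an edge $e$, its two sides are separated by the tetrahedra where $e$ is top and bottom diagonal. A weight system $w=(w_f)$ is a nonzero nonnegative integral solution to the branch equations (for each edge, the weights of faces on the two sides have equal sums). Pulling apart sheets of $\sum w_f f$ gives an embedded surface triangulated by $\mathcal{Q}_{\mathcal{V},w}$, which has exactly $w_f$ triangles that are copies of each face $f$. The copies of a face $f$ are linearly ordered along the coorientation; $L(f)$ and $U(f)$ are the lowermost and uppermost copies, $L(F_w)$ and $U(F_w)$ the sets of these, and for a copy $y$ that is not uppermost, $\mathfrak{a}(y)$ is the copy of the same face immediately above $y$. $\mathrm{Aut}^+(\mathcal{Q}_{\mathcal{V},w})$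 is the group of orientation-preserving combinatorial automorphisms of $\mathcal{Q}_{\mathcal{V},w}$; in particular each induces a bijection on the set of triangles. *)

theory Defs
  imports Main
begin

text \<open>Triangles of the surface Q_{V,w}: the copies of a face f are indexed
  by their height k, 1 \<le> k \<le> w f, linearly ordered along the coorientation
  (k = 1 lowermost, k = w f uppermost).\<close>

definition Fw :: "'f set \<Rightarrow> ('f \<Rightarrow> nat) \<Rightarrow> 'f set" where
  "Fw F w = {f \<in> F. 0 < w f}"

definition triangles :: "'f set \<Rightarrow> ('f \<Rightarrow> nat) \<Rightarrow> ('f \<times> nat) set" where
  "triangles F w = {(f, k). f \<in> F \<and> 1 \<le> k \<and> k \<le> w f}"

definition lowest :: "'f \<Rightarrow> 'f \<times> nat" where
  "lowest f = (f, 1)"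

definition uppers :: "'f set \<Rightarrow> ('f \<Rightarrow> nat) \<Rightarrow> ('f \<times> nat) set" where
  "uppers F w = {(f, w f) | f. f \<in> Fw F w}"

definition above :: "'f \<times> nat \<Rightarrow> 'f \<times> nat" where
  "above y = (fst y, Suc (snd y))"

text \<open>The (unstopped) sequence; index 0 corresponds to g_1 of the paper.
  The actual sequence g^phi(f) is its prefix up to the first element in U(F_w).\<close>
primrec gseq :: "('f \<times> nat \<Rightarrow> 'f \<times> nat) \<Rightarrow> 'f \<Rightarrow> nat \<Rightarrow> 'f \<times> nat" where
  "gseq \<phi> f 0 = \<phi> (lowest f)"
| "gseq \<phi> f (Suc i) = \<phi> (above (gseq \<phi> f i))"

definition gseq_finite :: "('f \<times> nat \<Rightarrow> 'f \<times> nat) \<Rightarrow> 'f set \<Rightarrow> ('f \<Rightarrow> nat) \<Rightarrow> 'f \<Rightarrow> bool" where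
  "gseq_finite \<phi> F w f = (\<exists>n. gseq \<phi> f n \<in> uppers F w)"

definition glast :: "('f \<times> nat \<Rightarrow> 'f \<times> nat) \<Rightarrow> 'f set \<Rightarrow> ('f \<Rightarrow> nat) \<Rightarrow> 'f \<Rightarrow> 'f \<times> nat" where
  "glast \<phi> F w f = gseq \<phi> f (LEAST n. gseq \<phi> f n \<in> uppers F w)"

end

theory Submission
  imports Defs
begin

text \<open>The step y \<mapsto> \<phi>(a(y)) is injective on the triangles outside U(F_w) and maps
  them into the triangles; the starting triangles \<phi>(L(f)) lie outside its image, because a
  lowermost copy is not the copy above anything. Orbits of such a partial injection that start
  outside its image never meet, neither themselves nor each other, before leaving its domain.
  In a finite set an orbit therefore reaches U(F_w), and orbits from different starting points
  reach it at different triangles.\<close>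

lemma funpow_in_before_exit:
  assumes "s ` (A - U) \<subseteq> A" and "x \<in> A" and "\<forall>k<n. (s ^^ k) x \<notin> U"
  shows "(s ^^ n) x \<in> A"
  using assms(3)
proof (induction n)
  case 0
  then show ?case using \<open>x \<in> A\<close> by simp
next
  case (Suc n)
  then have "(s ^^ n) x \<in> A - U" by simp
  then show ?case using assms(1) by auto
qed

lemma funpow_eq_before_exit_imp_eq:
  assumes inj: "inj_on s (A - U)" and maps: "s ` (A - U) \<subseteq> A"
    and x: "x \<in> A - s ` (A - U)" and y: "y \<in> A - s ` (A - U)"
  shows "\<forall>k<i. (s ^^ k) x \<notin> U \<Longrightarrow> \<forall>k<j. (s ^^ k) y \<notin> U \<Longrightarrow> (s ^^ i) x = (s ^^ j) y
    \<Longrightarrow> i = j \<and> x = y"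
proof (induction i arbitrary: j)
  have before_exit: "(s ^^ n) z \<in> A - U" if "z \<in> A" "\<forall>k<Suc n. (s ^^ k) z \<notin> U" for z n
    using funpow_in_before_exit[OF maps that(1), of n] that(2) by simp
  {
    case 0
    show ?case
    proof (cases j)
      case (Suc j')
      then have "x = s ((s ^^ j') y)" and "(s ^^ j') y \<in> A - U"
        using "0.prems" before_exit[of y j'] y by auto
      then show ?thesis using x by blast
    qed (use "0.prems" in simp)
  next
    case (Suc i')
    show ?case
    proof (cases j)
      case 0
      then have "y = s ((s ^^ i') x)" and "(s ^^ i') x \<in> A - U"
        using Suc.prems before_exit[of x i'] x by auto
      then show ?thesis using y by blast
    next
      case (Suc j')
      have "(s ^^ i') x \<in> A - U" "(s ^^ j') y \<in> A - U"
        using Suc.prems \<open>j = Suc j'\<close> before_exit x y by auto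
      with inj have "(s ^^ i') x = (s ^^ j') y"
        using Suc.prems \<open>j = Suc j'\<close> by (auto dest: inj_onD)
      then show ?thesis using Suc.IH[of j'] Suc.prems \<open>j = Suc j'\<close> by auto
    qed
  }
qed

lemma funpow_exits_if_finite:
  assumes "finite A" and "inj_on s (A - U)" and "s ` (A - U) \<subseteq> A"
    and x: "x \<in> A - s ` (A - U)"
  shows "\<exists>n. (s ^^ n) x \<in> U"
proof (rule ccontr)
  assume "\<nexists>n. (s ^^ n) x \<in> U"
  then have "inj (\<lambda>n. (s ^^ n) x)" and "range (\<lambda>n. (s ^^ n) x) \<subseteq> A"
    using funpow_eq_before_exit_imp_eq[OF assms(2,3) x x] funpow_in_before_exit[OF assms(3)] x
    by (auto intro: injI)
  then show False
    using \<open>finite A\<close> finite_imageD finite_subset infinite_UNIV_nat by metis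
qed

lemma funpow_first_exits_differ:
  assumes "inj_on s (A - U)" and "s ` (A - U) \<subseteq> A"
    and "x \<in> A - s ` (A - U)" and "y \<in> A - s ` (A - U)" and "x \<noteq> y"
  shows "(s ^^ (LEAST n. (s ^^ n) x \<in> U)) x \<noteq> (s ^^ (LEAST n. (s ^^ n) y \<in> U)) y"
proof -
  define i where "i = (LEAST n. (s ^^ n) x \<in> U)"
  define j where "j = (LEAST n. (s ^^ n) y \<in> U)"
  have "\<forall>k<i. (s ^^ k) x \<notin> U" and "\<forall>k<j. (s ^^ k) y \<notin> U"
    unfolding i_def j_def by (auto dest: not_less_Least)
  then have "(s ^^ i) x \<noteq> (s ^^ j) y"
    using funpow_eq_before_exit_imp_eq[OF assms(1-4)] \<open>x \<noteq> y\<close> by blast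
  then show ?thesis unfolding i_def j_def .
qed

lemma gseq_eq_funpow: "gseq \<phi> f n = ((\<phi> \<circ> above) ^^ n) (\<phi> (lowest f))"
  by (induction n) simp_all

lemma finite_triangles: "finite F \<Longrightarrow> finite (triangles F w)"
  by (rule finite_subset[of _ "Sigma F (\<lambda>f. {1..w f})"]) (auto simp: triangles_def)

lemma lowest_in_triangles: "f \<in> Fw F w \<Longrightarrow> lowest f \<in> triangles F w"
  by (simp add: lowest_def triangles_def Fw_def)

lemma above_in_triangles: "y \<in> triangles F w - uppers F w \<Longrightarrow> above y \<in> triangles F w"
  by (cases y) (auto simp: above_def triangles_def uppers_def Fw_def)

lemma lowest_neq_above: "y \<in> triangles F w \<Longrightarrow> lowest f \<noteq> above y"
  by (cases y) (simp add: lowest_def above_def triangles_def)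

lemma inj_above: "inj above"
  by (auto intro: injI simp: above_def prod_eq_iff)

context
  fixes F :: "'f set" and w :: "'f \<Rightarrow> nat" and \<phi> :: "'f \<times> nat \<Rightarrow> 'f \<times> nat"
  assumes bij: "bij_betw \<phi> (triangles F w) (triangles F w)"
begin

lemma step_maps_nonuppers:
  "(\<phi> \<circ> above) ` (triangles F w - uppers F w) \<subseteq> triangles F w"
  by (rule image_subsetI) (simp add: bij_betw_apply[OF bij] above_in_triangles)

lemma inj_on_step: "inj_on (\<phi> \<circ> above) (triangles F w - uppers F w)"
proof (rule comp_inj_on)
  show "inj_on above (triangles F w - uppers F w)"
    using inj_above by (rule inj_on_subset) simp
  show "inj_on \<phi> (above ` (triangles F w - uppers F w))"
    using bij_betw_imp_inj_on[OF bij] by (rule inj_on_subset) (use above_in_triangles in blast)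
qed

lemma start_notin_step_image:
  assumes "f \<in> Fw F w"
  shows "\<phi> (lowest f) \<in> triangles F w - (\<phi> \<circ> above) ` (triangles F w - uppers F w)"
proof -
  have "\<phi> (lowest f) \<noteq> \<phi> (above y)" if y: "y \<in> triangles F w - uppers F w" for y
  proof
    assume "\<phi> (lowest f) = \<phi> (above y)"
    then have "lowest f = above y"
      using inj_onD[OF bij_betw_imp_inj_on[OF bij]] lowest_in_triangles[OF assms]
        above_in_triangles[OF y] by blast
    with lowest_neq_above[OF DiffD1[OF y]] show False by contradiction
  qed
  then show ?thesis
    using bij_betw_apply[OF bij lowest_in_triangles[OF assms]] by auto
qed

lemma gseq_finite_if_finite_faces:
  assumes "finite F" and "f \<in> Fw F w"
  shows "gseq_finite \<phi> F w f"
  unfolding gseq_finite_def gseq_eq_funpow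
  by (rule funpow_exits_if_finite[OF finite_triangles[OF assms(1)]
        inj_on_step step_maps_nonuppers start_notin_step_image[OF assms(2)]])

lemma inj_on_glast: "inj_on (glast \<phi> F w) (Fw F w)"
proof (rule inj_onI)
  fix f f' assume f: "f \<in> Fw F w" and f': "f' \<in> Fw F w"
    and eq: "glast \<phi> F w f = glast \<phi> F w f'"
  show "f = f'"
  proof (rule ccontr)
    assume "f \<noteq> f'"
    then have "\<phi> (lowest f) \<noteq> \<phi> (lowest f')"
      by (intro inj_on_contraD[OF bij_betw_imp_inj_on[OF bij]] lowest_in_triangles f f')
        (simp add: lowest_def)
    then have "glast \<phi> F w f \<noteq> glast \<phi> F w f'"
      unfolding glast_def gseq_eq_funpow
      by (rule funpow_first_exits_differ[OF inj_on_step step_maps_nonuppers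
            start_notin_step_image[OF f] start_notin_step_image[OF f']])
    with eq show False by contradiction
  qed
qed

end

theorem lemma3p4:
  fixes F :: "'f set" and w :: "'f \<Rightarrow> nat" and \<phi> :: "'f \<times> nat \<Rightarrow> 'f \<times> nat"
  assumes "finite F"
    and "\<exists>f\<in>F. 0 < w f"
    and "bij_betw \<phi> (triangles F w) (triangles F w)"
  shows "(\<forall>f\<in>Fw F w. gseq_finite \<phi> F w f)
       \<and> (\<forall>f\<in>Fw F w. \<forall>f'\<in>Fw F w. f \<noteq> f' \<longrightarrow> glast \<phi> F w f \<noteq> glast \<phi> F w f')"
  using gseq_finite_if_finite_faces[OF assms(3,1)] inj_on_glast[OF assms(3)]
  by (blast dest: inj_onD)

end
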